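(* For every integer $k\ge 1$, $$\sum_{n=k}^\infty \frac{B_{n,k}}{4^n}=1,\qquad \sum_{n=k}^\infty B_{n,k}\frac{(-1)^n}{4^n}=(2\sqrt2-3)^k,$$ $$\sum_{n=k}^\infty \frac{A_{n,k+1}}{4^n}=2,\qquad \sum_{n=k}^\infty A_{n,k+1}\frac{(-1)^n}{4^n}=2(\sqrt2-1)(2\sqrt2-3)^k,$$ and moreover $$\sum_{k\ge1}\sum_{n\ge k} \frac{B_{n,k}}{4^{n+k}}=\frac13,\qquad \sum_{k\ge1}\sum_{n\ge k} B_{n,k}\frac{(-1)^n}{4^{n+k}}=\frac{8\sqrt2-13}{41},$$ $$\sum_{k\ge0}\sum_{n\ge k} \frac{A_{n,k+1}}{4^{n+k}}=\frac83,\qquad \sum_{k\ge0}\sum_{n\ge k} A_{n,k+1}\frac{(-1)^n}{4^{n+k}}=\frac{8}{41}(5\sqrt2-3).$$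
   Context: The Catalan triangle numbers are $B_{n,k}=\frac{k}{n}\binom{2n}{n-k}$ for integers $n\ge1$, $1\le k\le n$, and $A_{n,k}=\frac{2k-1}{2n+1}\binom{2n+1}{n+1-k}$ for integers $n\ge 0$, $1\le k\le n+1$. *)

theory Defs
  imports Complex_Main
begin

text \<open>Catalan triangle numbers, as real numbers (used only for n \<ge> 1, 1 \<le> k \<le> n,
  resp. n \<ge> 0, 1 \<le> k \<le> n+1).\<close>
definition catB :: "nat \<Rightarrow> nat \<Rightarrow> real" where
  "catB n k = real k / real n * real ((2*n) choose (n - k))"

definition catA :: "nat \<Rightarrow> nat \<Rightarrow> real" where
  "catA n k = (2 * real k - 1) / (2 * real n + 1) * real ((2*n+1) choose (n + 1 - k))"

end

(* Extend the triangle by B(0,0) = 1 and B(n,k) = 0 outside 1 <= k <= n. Absorption turns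
   B(n,k) into the ballot difference C(2n-1,n+k-1) - C(2n-1,n+k), and A(n,k+1) into
   C(2n,n+k) - C(2n,n+k+1); Pascal's rule then gives B(n+1,k) = B(n,k-1) + 2 B(n,k) + B(n,k+1)
   for k >= 1 and A(n,k+1) = B(n,k) + B(n,k+1). So the column series F_k(x) = sum_n B(n,k) x^n
   satisfy F_0 = 1 and F_(k+2) = (1/x - 2) F_(k+1) - F_k.

   At x = 1/4 this reads F_(k+2) = 2 F_(k+1) - F_k, whence F_k = 1 + k (F_1 - 1). Telescoping the
   Catalan numbers shows F_1 <= 1, and F_k >= 0 for all k forces F_1 = 1.
   At x = -1/4 the recurrence F_(k+2) = -6 F_(k+1) - F_k has characteristic roots 2 sqrt 2 - 3
   and -2 sqrt 2 - 3; as |F_k(-1/4)| <= F_k(1/4) = 1, the component along the root of modulus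
   > 1 vanishes and F_k(-1/4) = (2 sqrt 2 - 3)^k. The double sums are then geometric series. *)

theory Submission
  imports Defs
begin

lemma binomial_Suc_Suc_twice:
  "Suc (Suc N) choose Suc (Suc j) = (N choose j) + 2 * (N choose Suc j) + (N choose Suc (Suc j))"
  by simp

lemma binomial_absorption_diff:
  assumes "0 < i"
  shows "(real i - real (N - i)) * real (N choose i)
       = real N * (real ((N - 1) choose (i - 1)) - real ((N - 1) choose i))"
proof -
  have "real i * real (N choose i) = real N * real ((N - 1) choose (i - 1))"
    using times_binomial_minus1_eq[OF assms, of N] by (metis of_nat_mult)
  moreover have "real (N - i) * real (N choose i) = real N * real ((N - 1) choose i)"
    using binomial_absorb_comp[of N i] by (metis of_nat_mult)
  ultimately show ?thesis by (simp add: algebra_simps)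
qed

lemma catB_ballot:
  assumes "0 < n" "k \<le> n"
  shows "catB n k = real ((2*n - 1) choose (n + k - 1)) - real ((2*n - 1) choose (n + k))"
proof -
  have "real ((2*n) choose (n - k)) = real ((2*n) choose (n + k))"
    using binomial_symmetric[of "n - k" "2*n"] assms by (simp add: add.commute)
  moreover have "real (n + k) - real (2*n - (n + k)) = 2 * real k"
    using assms by simp
  ultimately show ?thesis
    using binomial_absorption_diff[of "n + k" "2*n"] assms by (simp add: catB_def field_simps)
qed

lemma catA_ballot:
  assumes "k \<le> n"
  shows "catA n (k + 1) = real ((2*n) choose (n + k)) - real ((2*n) choose (n + k + 1))"
proof -
  have "real ((2*n + 1) choose (n - k)) = real ((2*n + 1) choose (n + k + 1))"
    using binomial_symmetric[of "n - k" "2*n + 1"] assms by (simp add: add.commute)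
  moreover have "real (n + k + 1) - real (2*n + 1 - (n + k + 1)) = 2 * real k + 1"
    using assms by simp
  ultimately show ?thesis
    using binomial_absorption_diff[of "n + k + 1" "2*n + 1"] assms
    by (simp add: catA_def field_simps)
qed

definition catB_ext :: "nat \<Rightarrow> nat \<Rightarrow> real" where
  "catB_ext n k = (if k = 0 then of_bool (n = 0) else if n < k then 0 else catB n k)"

lemma catB_ext_nonneg: "0 \<le> catB_ext n k"
  by (simp add: catB_ext_def catB_def)

lemma catB_ext_ballot:
  assumes "0 < n"
  shows "catB_ext n k = real ((2*n - 1) choose (n + k - 1)) - real ((2*n - 1) choose (n + k))"
proof (cases "k \<le> n")
  case True
  then show ?thesis
    using catB_ballot[OF assms True] assms by (auto simp: catB_ext_def catB_def)
next
  case False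
  then show ?thesis using assms by (simp add: catB_ext_def binomial_eq_0)
qed

lemma catB_ext_Suc:
  assumes "0 < k"
  shows "catB_ext (Suc n) k = catB_ext n (k - 1) + 2 * catB_ext n k + catB_ext n (k + 1)"
proof (cases n)
  case 0
  then show ?thesis using assms by (simp add: catB_ext_def catB_def)
next
  case (Suc p)
  obtain q where k: "k = Suc q" using assms by (cases k) auto
  have "real (2*p + 3 choose p + q + 2) = real (2*p + 1 choose p + q)
     + 2 * real (2*p + 1 choose p + q + 1) + real (2*p + 1 choose p + q + 2)"
    using binomial_Suc_Suc_twice[of "2*p + 1" "p + q"] by (simp add: numeral_eq_Suc)
  moreover have "real (2*p + 3 choose p + q + 3) = real (2*p + 1 choose p + q + 1)
     + 2 * real (2*p + 1 choose p + q + 2) + real (2*p + 1 choose p + q + 3)"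
    using binomial_Suc_Suc_twice[of "2*p + 1" "p + q + 1"] by (simp add: numeral_eq_Suc)
  ultimately show ?thesis
    unfolding Suc k by (simp add: catB_ext_ballot numeral_eq_Suc)
qed

lemma catA_eq_catB_ext_add:
  assumes "k \<le> n"
  shows "catA n (k + 1) = catB_ext n k + catB_ext n (k + 1)"
proof (cases n)
  case 0
  then show ?thesis using assms by (simp add: catA_def catB_ext_def)
next
  case (Suc p)
  have "real (2*p + 2 choose p + k + 1)
      = real (2*p + 1 choose p + k) + real (2*p + 1 choose p + k + 1)"
    using binomial_Suc_Suc[of "2*p + 1" "p + k"] by simp
  moreover have "real (2*p + 2 choose p + k + 2)
      = real (2*p + 1 choose p + k + 1) + real (2*p + 1 choose p + k + 2)"
    using binomial_Suc_Suc[of "2*p + 1" "p + k + 1"] by simp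
  ultimately show ?thesis
    using catA_ballot[OF assms] unfolding Suc by (simp add: catB_ext_ballot)
qed

lemma sums_catB_ext_0: "(\<lambda>n. catB_ext n 0 * x ^ n) sums 1"
proof -
  have "(\<lambda>n. catB_ext n 0 * x ^ n) = (\<lambda>n. if n = 0 then 1 else 0)"
    by (auto simp: catB_ext_def)
  then show ?thesis using sums_single[of 0 "\<lambda>_. 1"] by simp
qed

lemma sums_catB_ext_Suc_Suc:
  fixes x :: real
  assumes "x \<noteq> 0"
    and P: "(\<lambda>n. catB_ext n k * x ^ n) sums P"
    and Q: "(\<lambda>n. catB_ext n (Suc k) * x ^ n) sums Q"
  shows "(\<lambda>n. catB_ext n (Suc (Suc k)) * x ^ n) sums ((1 / x - 2) * Q - P)"
proof -
  have "(\<lambda>n. catB_ext (Suc n) (Suc k) * x ^ Suc n) sums Q"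
    using Q sums_Suc_iff[of "\<lambda>n. catB_ext n (Suc k) * x ^ n"] by (simp add: catB_ext_def)
  then have "(\<lambda>n. catB_ext (Suc n) (Suc k) * x ^ Suc n / x - 2 * (catB_ext n (Suc k) * x ^ n)
      - catB_ext n k * x ^ n) sums (Q / x - 2 * Q - P)"
    by (intro sums_diff sums_divide sums_mult P Q)
  moreover have "catB_ext (Suc n) (Suc k) * x ^ Suc n / x - 2 * (catB_ext n (Suc k) * x ^ n)
      - catB_ext n k * x ^ n = catB_ext n (Suc (Suc k)) * x ^ n" for n
    using assms(1) by (simp add: catB_ext_Suc field_simps)
  ultimately show ?thesis by (simp add: algebra_simps)
qed

(* B(m+1,1) is the Catalan number C(2m+2,m+1)/(m+2) *)
lemma catB_ext_1_telescoping:
  "catB_ext (Suc m) 1 / 4 ^ Suc m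
     = 2 * (real ((2 * Suc m) choose Suc m) / 4 ^ Suc m
            - real ((2 * Suc (Suc m)) choose Suc (Suc m)) / 4 ^ Suc (Suc m))"
proof -
  have "real ((2*m + 4) choose (m + 2)) = real ((2*m + 2) choose m)
      + 2 * real ((2*m + 2) choose (m + 1)) + real ((2*m + 2) choose (m + 2))"
    using binomial_Suc_Suc_twice[of "2*m + 2" m] by (simp add: numeral_eq_Suc)
  moreover have "(2*m + 2) choose m = (2*m + 2) choose (m + 2)"
    using binomial_symmetric[of m "2*m + 2"] by simp
  moreover have "(2*m + 1) choose m = (2*m + 1) choose (m + 1)"
    using binomial_symmetric[of m "2*m + 1"] by simp
  ultimately show ?thesis
    by (simp add: catB_ext_ballot numeral_eq_Suc field_simps)
qed

lemma catB_ext_1_partial_sums_le: "(\<Sum>n<N. catB_ext n 1 / 4 ^ n) \<le> 1"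
proof (cases N)
  case 0
  then show ?thesis by simp
next
  case (Suc M)
  define c :: "nat \<Rightarrow> real" where "c m = real ((2 * m) choose m) / 4 ^ m" for m
  have "(\<Sum>n<N. catB_ext n 1 / 4 ^ n) = (\<Sum>m<M. 2 * (c (Suc m) - c (Suc (Suc m))))"
    unfolding Suc sum.lessThan_Suc_shift c_def catB_ext_1_telescoping
    by (simp add: catB_ext_def del: power_Suc)
  also have "\<dots> = 2 * (c 1 - c (Suc M))"
    by (simp only: sum_distrib_left[symmetric] sum_lessThan_telescope'[of "\<lambda>m. c (Suc m)"]
        One_nat_def)
  also have "\<dots> \<le> 1" by (simp add: c_def)
  finally show ?thesis .
qed

lemma catB_ext_sums_quarter_linear:
  assumes "(\<lambda>n. catB_ext n 1 * (1/4) ^ n) sums L"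
  shows "(\<lambda>n. catB_ext n k * (1/4) ^ n) sums (1 + real k * (L - 1))"
proof -
  have "(\<lambda>n. catB_ext n k * (1/4) ^ n) sums (1 + real k * (L - 1))
      \<and> (\<lambda>n. catB_ext n (Suc k) * (1/4) ^ n) sums (1 + real (Suc k) * (L - 1))"
  proof (induction k)
    case 0
    then show ?case using sums_catB_ext_0 assms by simp
  next
    case (Suc k)
    then have "(\<lambda>n. catB_ext n (Suc (Suc k)) * (1/4) ^ n)
        sums ((1 / (1/4) - 2) * (1 + real (Suc k) * (L - 1)) - (1 + real k * (L - 1)))"
      by (intro sums_catB_ext_Suc_Suc) auto
    then show ?case using Suc by (simp add: algebra_simps)
  qed
  then show ?thesis by blast
qed

lemma catB_ext_sums_quarter: "(\<lambda>n. catB_ext n k * (1/4) ^ n) sums 1"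
proof -
  let ?f = "\<lambda>n. catB_ext n 1 * (1/4) ^ n"
  have partial: "(\<Sum>n<N. ?f n) \<le> 1" for N
    using catB_ext_1_partial_sums_le[of N] by (simp add: power_one_over)
  have "summable ?f"
    by (rule bounded_imp_summable[where B = 1])
       (use partial[of "Suc _"] in
         \<open>simp_all add: catB_ext_nonneg lessThan_Suc_atMost[symmetric] del: sum.lessThan_Suc\<close>)
  then obtain L where L: "?f sums L" by (auto simp: summable_def)
  have "L \<le> 1"
    using suminf_le_const[OF \<open>summable ?f\<close> partial] L by (simp add: sums_iff)
  have "1 \<le> L"
  proof (rule ccontr)
    assume "\<not> 1 \<le> L"
    then obtain k :: nat where "1 < real k * (1 - L)"
      using ex_less_of_nat_mult[of "1 - L" 1] by auto
    moreover have "0 \<le> 1 + real k * (L - 1)"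
      by (rule sums_le[OF _ sums_zero catB_ext_sums_quarter_linear[OF L]])
         (simp add: catB_ext_nonneg)
    ultimately show False by (simp add: algebra_simps)
  qed
  then show ?thesis using catB_ext_sums_quarter_linear[OF L, of k] \<open>L \<le> 1\<close> by simp
qed

lemma bounded_recurrence_eq_power:
  fixes G :: "nat \<Rightarrow> real"
  assumes rec: "\<And>k. G (Suc (Suc k)) = (r + s) * G (Suc k) - r * s * G k"
    and bounded: "\<And>k. \<bar>G k\<bar> \<le> B"
    and "1 < \<bar>s\<bar>"
  shows "G k = G 0 * r ^ k"
proof -
  define H where "H k = G (Suc k) - r * G k" for k
  have "H (Suc k) = s * H k" for k
    unfolding H_def rec by (simp add: algebra_simps)
  then have H_power: "H k = s ^ k * H 0" for k
    by (induction k) simp_all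
  have "H 0 = 0"
  proof (rule ccontr)
    assume "H 0 \<noteq> 0"
    obtain k where "(B + \<bar>r\<bar> * B) / \<bar>H 0\<bar> < \<bar>s\<bar> ^ k"
      using real_arch_pow[OF \<open>1 < \<bar>s\<bar>\<close>] by blast
    then have "B + \<bar>r\<bar> * B < \<bar>H k\<bar>"
      using \<open>H 0 \<noteq> 0\<close> by (simp add: H_power[of k] abs_mult power_abs field_simps)
    moreover have "\<bar>H k\<bar> \<le> \<bar>G (Suc k)\<bar> + \<bar>r\<bar> * \<bar>G k\<bar>"
      unfolding H_def by (metis abs_mult abs_triangle_ineq4)
    moreover have "\<dots> \<le> B + \<bar>r\<bar> * B"
      by (intro add_mono mult_left_mono bounded) simp_all
    ultimately show False by simp
  qed
  then have "G (Suc k) = r * G k" for k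
    using H_power[of k] by (simp add: H_def)
  then show ?thesis by (induction k) simp_all
qed

lemma catB_ext_sums_neg_quarter: "(\<lambda>n. catB_ext n k * (-1/4) ^ n) sums (2 * sqrt 2 - 3) ^ k"
proof -
  have norm_eq: "norm (catB_ext n k * (-1/4) ^ n) = catB_ext n k * (1/4) ^ n" for n k
    by (simp add: abs_mult power_abs catB_ext_nonneg)
  define r s :: real where "r = 2 * sqrt 2 - 3" and "s = - 3 - 2 * sqrt 2"
  have rs: "r + s = -6" "r * s = 1"
    unfolding r_def s_def by (simp_all add: algebra_simps)
  have "s < -1"
    using real_sqrt_ge_zero[of 2] unfolding s_def by linarith
  then have "1 < \<bar>s\<bar>" by simp
  define G where "G k = (\<Sum>n. catB_ext n k * (-1/4) ^ n)" for k
  have abs_summable: "summable (\<lambda>n. norm (catB_ext n k * (-1/4) ^ n))" for k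
    unfolding norm_eq by (rule sums_summable[OF catB_ext_sums_quarter])
  have G_sums: "(\<lambda>n. catB_ext n k * (-1/4) ^ n) sums G k" for k
    unfolding G_def using summable_norm_cancel[OF abs_summable] by (rule summable_sums)
  have G_bounded: "\<bar>G k\<bar> \<le> 1" for k
  proof -
    have "norm (G k) \<le> (\<Sum>n. norm (catB_ext n k * (-1/4) ^ n))"
      unfolding G_def using abs_summable by (rule summable_norm)
    also have "\<dots> = 1"
      unfolding norm_eq by (rule sums_unique[OF catB_ext_sums_quarter, symmetric])
    finally show ?thesis by simp
  qed
  have G_0: "G 0 = 1"
    using sums_unique2[OF G_sums sums_catB_ext_0] .
  have G_rec: "G (Suc (Suc k)) = (r + s) * G (Suc k) - r * s * G k" for k
  proof -
    have "(\<lambda>n. catB_ext n (Suc (Suc k)) * (-1/4) ^ n)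
        sums ((1 / (-1/4) - 2) * G (Suc k) - G k)"
      by (rule sums_catB_ext_Suc_Suc[OF _ G_sums G_sums]) simp
    from sums_unique2[OF this G_sums] show ?thesis by (simp add: rs)
  qed
  have "G k = r ^ k"
    using bounded_recurrence_eq_power[where G = G and r = r and s = s,
        OF G_rec G_bounded \<open>1 < \<bar>s\<bar>\<close>] G_0
    by simp
  then show ?thesis using G_sums[of k] by (simp add: r_def)
qed

lemma sums_catB_ext_shift:
  assumes "(\<lambda>n. catB_ext n k * x ^ n) sums S" and "m \<le> k"
  shows "(\<lambda>n. catB_ext (n + m) k * x ^ (n + m)) sums S"
proof -
  have "(\<Sum>n<m. catB_ext n k * x ^ n) = 0"
    using assms(2) by (simp add: catB_ext_def)
  then show ?thesis
    using assms(1) sums_iff_shift[of "\<lambda>n. catB_ext n k * x ^ n" m S] by simp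
qed

lemma sums_catB_column_of_catB_ext:
  assumes "(\<lambda>n. catB_ext n k * x ^ n) sums S" and "0 < k"
  shows "(\<lambda>n. catB (n + k) k * x ^ (n + k)) sums S"
  using sums_catB_ext_shift[OF assms(1) order_refl] assms(2) by (simp add: catB_ext_def)

lemma sums_catA_column_of_catB_ext:
  assumes "(\<lambda>n. catB_ext n k * x ^ n) sums S"
    and "(\<lambda>n. catB_ext n (k + 1) * x ^ n) sums T"
  shows "(\<lambda>n. catA (n + k) (k + 1) * x ^ (n + k)) sums (S + T)"
proof -
  have "(\<lambda>n. catB_ext (n + k) k * x ^ (n + k) + catB_ext (n + k) (k + 1) * x ^ (n + k))
      sums (S + T)"
    using assms by (intro sums_add sums_catB_ext_shift) auto
  moreover have "catA (n + k) (k + 1) = catB_ext (n + k) k + catB_ext (n + k) (k + 1)" for n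
    by (rule catA_eq_catB_ext_add) simp
  ultimately show ?thesis by (simp only: distrib_right)
qed

lemma catB_column_sums: "0 < k \<Longrightarrow> (\<lambda>n. catB (n + k) k / 4 ^ (n + k)) sums 1"
  using sums_catB_column_of_catB_ext[OF catB_ext_sums_quarter] by (simp add: power_one_over)

lemma catB_column_alternating_sums:
  "0 < k \<Longrightarrow>
    (\<lambda>n. catB (n + k) k * (-1) ^ (n + k) / 4 ^ (n + k)) sums (2 * sqrt 2 - 3) ^ k"
  using sums_catB_column_of_catB_ext[OF catB_ext_sums_neg_quarter] unfolding power_divide by simp

lemma catA_column_sums: "(\<lambda>n. catA (n + k) (k + 1) / 4 ^ (n + k)) sums 2"
  using sums_catA_column_of_catB_ext[OF catB_ext_sums_quarter catB_ext_sums_quarter]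
  by (simp add: power_one_over)

lemma catA_column_alternating_sums:
  "(\<lambda>n. catA (n + k) (k + 1) * (-1) ^ (n + k) / 4 ^ (n + k))
     sums (2 * (sqrt 2 - 1) * (2 * sqrt 2 - 3) ^ k)"
proof -
  have "(2 * sqrt 2 - 3) ^ k + (2 * sqrt 2 - 3) ^ (k + 1)
      = 2 * (sqrt 2 - 1) * (2 * sqrt 2 - 3 :: real) ^ k"
    by (simp add: algebra_simps)
  then show ?thesis
    using sums_catA_column_of_catB_ext[OF catB_ext_sums_neg_quarter catB_ext_sums_neg_quarter, of k]
    unfolding power_divide by simp
qed

lemma suminf_divide_power_add:
  fixes c :: "'a :: {real_normed_field, banach}"
  assumes "(\<lambda>n. f n / c ^ (n + k)) sums S"
  shows "(\<Sum>n. f n / c ^ (n + k + k)) = S / c ^ k"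
  using sums_unique[OF sums_divide[OF assms, of "c ^ k"]] by (simp add: power_add field_simps)

lemma abs_two_sqrt2_minus_3_less_1: "\<bar>2 * sqrt 2 - 3\<bar> < (1 :: real)"
proof -
  have "1 < sqrt (2 :: real)" "sqrt (2 :: real) < 3/2"
    by (simp, rule real_less_lsqrt) (auto simp: power2_eq_square)
  then show ?thesis by (simp only: abs_less_iff) linarith
qed

lemma sums_geometric_two_sqrt2_minus_3:
  "(\<lambda>j. ((2 * sqrt 2 - 3) / 4) ^ j) sums (4 / (7 - 2 * sqrt 2 :: real))"
proof -
  have "\<bar>(2 * sqrt 2 - 3) / 4\<bar> < (1 :: real)"
    using abs_two_sqrt2_minus_3_less_1 by simp
  then show ?thesis
    using geometric_sums[of "(2 * sqrt 2 - 3) / 4 :: real"] by (simp add: field_simps)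
qed

lemma catB_double_sums:
  "(\<lambda>j. \<Sum>n. catB (n + (j+1)) (j+1) / 4 ^ (n + (j+1) + (j+1))) sums (1/3)"
proof -
  have column: "(\<Sum>n. catB (n + (j+1)) (j+1) / 4 ^ (n + (j+1) + (j+1)))
      = 1/4 * (1/4) ^ j" for j
    using suminf_divide_power_add[OF catB_column_sums, where k = "j+1"]
    by (simp add: power_one_over)
  have "(\<lambda>j. 1/4 * (1/4) ^ j) sums (1/3 :: real)"
    using sums_mult[OF geometric_sums[of "1/4 :: real"], of "1/4"] by simp
  then show ?thesis unfolding column .
qed

lemma catB_alternating_double_sums:
  "(\<lambda>j. \<Sum>n. catB (n + (j+1)) (j+1) * (-1) ^ (n + (j+1)) / 4 ^ (n + (j+1) + (j+1)))
     sums ((8 * sqrt 2 - 13) / 41)"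
proof -
  define q :: real where "q = (2 * sqrt 2 - 3) / 4"
  have column: "(\<Sum>n. catB (n + (j+1)) (j+1) * (-1) ^ (n + (j+1)) / 4 ^ (n + (j+1) + (j+1)))
      = q * q ^ j" for j
    using suminf_divide_power_add[OF catB_column_alternating_sums, where k = "j+1"]
    by (simp add: q_def power_divide)
  have "7 - 2 * sqrt 2 \<noteq> (0 :: real)"
    using abs_two_sqrt2_minus_3_less_1 by linarith
  then have limit: "q * (4 / (7 - 2 * sqrt 2)) = (8 * sqrt 2 - 13) / 41"
    by (simp add: q_def field_simps)
  have "(\<lambda>j. q * q ^ j) sums ((8 * sqrt 2 - 13) / 41)"
    using sums_mult[OF sums_geometric_two_sqrt2_minus_3[folded q_def], of q, unfolded limit] .
  then show ?thesis unfolding column .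
qed

lemma catA_double_sums: "(\<lambda>k. \<Sum>n. catA (n+k) (k+1) / 4 ^ (n+k+k)) sums (8/3)"
proof -
  have column: "(\<Sum>n. catA (n+k) (k+1) / 4 ^ (n+k+k)) = 2 * (1/4) ^ k" for k
    using suminf_divide_power_add[OF catA_column_sums, where k = k]
    by (simp add: power_one_over)
  have "(\<lambda>k. 2 * (1/4) ^ k) sums (8/3 :: real)"
    using sums_mult[OF geometric_sums[of "1/4 :: real"], of 2] by simp
  then show ?thesis unfolding column .
qed

lemma catA_alternating_double_sums:
  "(\<lambda>k. \<Sum>n. catA (n+k) (k+1) * (-1) ^ (n+k) / 4 ^ (n+k+k))
     sums (8/41 * (5 * sqrt 2 - 3))"
proof -
  define q :: real where "q = (2 * sqrt 2 - 3) / 4"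
  have column: "(\<Sum>n. catA (n+k) (k+1) * (-1) ^ (n+k) / 4 ^ (n+k+k))
      = 2 * (sqrt 2 - 1) * q ^ k" for k
    using suminf_divide_power_add[OF catA_column_alternating_sums, where k = k]
    by (simp add: q_def power_divide)
  have "7 - 2 * sqrt 2 \<noteq> (0 :: real)"
    using abs_two_sqrt2_minus_3_less_1 by linarith
  then have limit: "2 * (sqrt 2 - 1) * (4 / (7 - 2 * sqrt 2)) = 8/41 * (5 * sqrt 2 - 3)"
    by (simp add: field_simps)
  have "(\<lambda>k. 2 * (sqrt 2 - 1) * q ^ k) sums (8/41 * (5 * sqrt 2 - 3))"
    using sums_mult[OF sums_geometric_two_sqrt2_minus_3[folded q_def], of "2 * (sqrt 2 - 1)",
        unfolded limit] .
  then show ?thesis unfolding column .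
qed

theorem lemma2p2:
  shows "(\<forall>k::nat. k \<ge> 1 \<longrightarrow>
      (\<lambda>n. catB (n+k) k / 4 ^ (n+k)) sums 1
    \<and> (\<lambda>n. catB (n+k) k * (-1) ^ (n+k) / 4 ^ (n+k)) sums ((2 * sqrt 2 - 3) ^ k)
    \<and> (\<lambda>n. catA (n+k) (k+1) / 4 ^ (n+k)) sums 2
    \<and> (\<lambda>n. catA (n+k) (k+1) * (-1) ^ (n+k) / 4 ^ (n+k))
         sums (2 * (sqrt 2 - 1) * (2 * sqrt 2 - 3) ^ k))
    \<and> (\<lambda>j. \<Sum>n. catB (n + (j+1)) (j+1) / 4 ^ (n + (j+1) + (j+1))) sums (1/3)
    \<and> (\<lambda>j. \<Sum>n. catB (n + (j+1)) (j+1) * (-1) ^ (n + (j+1)) / 4 ^ (n + (j+1) + (j+1)))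
           sums ((8 * sqrt 2 - 13) / 41)
    \<and> (\<lambda>k. \<Sum>n. catA (n+k) (k+1) / 4 ^ (n+k+k)) sums (8/3)
    \<and> (\<lambda>k. \<Sum>n. catA (n+k) (k+1) * (-1) ^ (n+k) / 4 ^ (n+k+k))
           sums (8/41 * (5 * sqrt 2 - 3))"
  using catB_column_sums catB_column_alternating_sums catA_column_sums
    catA_column_alternating_sums catB_double_sums catB_alternating_double_sums
    catA_double_sums catA_alternating_double_sums
  by auto

end
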